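(* Let $A$ be an integral domain and let $B=A[u]$ be an overring of $A$ that is flat over $A$, where $u$ is a unit of $B$. Then there is a positive integer $m$ such that $u^{-r}\in A$ for all integers $r\ge m$. Consequently $B$ is a localization of $A$.
   Context: For an integral domain $A$ with field of fractions $K$, an overring of $A$ is a subring of $K$ containing $A$; it is a localization of $A$ if it equals $S^{-1}A$ for some multiplicatively closed set $S$ of nonzero elements of $A$. *)

theory Defs
  imports Main
begin

text \<open>All rings are modelled as subsets of an ambient field of type 'a.
  A subring of a field is an integral domain; its field of fractions is
  realised inside the ambient field as frac_field A.\<close>

definition subring_of :: "'a::field set \<Rightarrow> bool" where
  "subring_of R \<longleftrightarrow> 0 \<in> R \<and> 1 \<in> R \<and>
     (\<forall>x\<in>R. \<forall>y\<in>R. x + y \<in> R \<and> x - y \<in> R \<and> x * y \<in> R)"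

definition frac_field :: "'a::field set \<Rightarrow> 'a set" where
  "frac_field A = {a / b | a b. a \<in> A \<and> b \<in> A \<and> b \<noteq> 0}"

definition overring :: "'a::field set \<Rightarrow> 'a set \<Rightarrow> bool" where
  "overring A B \<longleftrightarrow> subring_of B \<and> A \<subseteq> B \<and> B \<subseteq> frac_field A"

definition adjoin :: "'a::field set \<Rightarrow> 'a \<Rightarrow> 'a set" where
  "adjoin A u = {(\<Sum>i\<le>n. c i * u ^ i) | n c. \<forall>i. c i \<in> A}"

definition is_unit_in :: "'a::field set \<Rightarrow> 'a \<Rightarrow> bool" where
  "is_unit_in B u \<longleftrightarrow> u \<in> B \<and> (\<exists>v\<in>B. u * v = 1)"

text \<open>Flatness of B as an A-module, via the equational criterion of flatness
  (Stacks Project, Tag 00HK): every relation among elements of B with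
  coefficients in A is a consequence of relations in A.\<close>
definition flat_over :: "'a::field set \<Rightarrow> 'a set \<Rightarrow> bool" where
  "flat_over A B \<longleftrightarrow>
     (\<forall>(n::nat) (a::nat \<Rightarrow> 'a) (b::nat \<Rightarrow> 'a).
        (\<forall>i<n. a i \<in> A) \<and> (\<forall>i<n. b i \<in> B) \<and> (\<Sum>i<n. a i * b i) = 0 \<longrightarrow>
        (\<exists>(k::nat) (c::nat \<Rightarrow> nat \<Rightarrow> 'a) (d::nat \<Rightarrow> 'a).
           (\<forall>i<n. \<forall>j<k. c i j \<in> A) \<and> (\<forall>j<k. d j \<in> B) \<and>
           (\<forall>i<n. b i = (\<Sum>j<k. c i j * d j)) \<and>
           (\<forall>j<k. (\<Sum>i<n. a i * c i j) = 0)))"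

definition mult_closed_nonzero :: "'a::field set \<Rightarrow> 'a set \<Rightarrow> bool" where
  "mult_closed_nonzero A S \<longleftrightarrow> S \<subseteq> A - {0} \<and> 1 \<in> S \<and> (\<forall>s\<in>S. \<forall>t\<in>S. s * t \<in> S)"

definition is_localization :: "'a::field set \<Rightarrow> 'a set \<Rightarrow> bool" where
  "is_localization A B \<longleftrightarrow>
     (\<exists>S. mult_closed_nonzero A S \<and> B = {a / s | a s. a \<in> A \<and> s \<in> S})"

end

theory Submission
  imports Defs
begin

text \<open>Put w = u^-1, an element of A[u]. Flatness of the overring A[u] forces the ideal
  of denominators D = {c \<in> A. c w \<in> A} to generate the unit ideal of A[u], hence so does
  D^N, whose elements c satisfy c w^i \<in> A for all i \<le> N. Writing w = \<Sum>(i\<le>n) e_i u^i and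
  multiplying by w^s gives w^(s+1) = \<Sum>(i\<le>n) e_i w^(s-i), so w is integral over A and every
  c \<in> D^n satisfies c A[w] \<subseteq> A. Multiplying a relation 1 = \<Sum> c_j d_j with c_j \<in> D^n and
  d_j \<in> A[u] by a high power of w, which absorbs the powers of u in the d_j, shows w^r \<in> A
  for all large r. Then every element of A[u] lands in A after multiplication by a power
  of w^m, so A[u] is the localization of A at the powers of w^m.\<close>

lemma subring_of_add: "subring_of R \<Longrightarrow> x \<in> R \<Longrightarrow> y \<in> R \<Longrightarrow> x + y \<in> R"
  and subring_of_mult: "subring_of R \<Longrightarrow> x \<in> R \<Longrightarrow> y \<in> R \<Longrightarrow> x * y \<in> R"
  and subring_of_zero: "subring_of R \<Longrightarrow> 0 \<in> R"
  and subring_of_one: "subring_of R \<Longrightarrow> 1 \<in> R"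
  by (simp_all add: subring_of_def)

lemma subring_of_uminus: "subring_of R \<Longrightarrow> x \<in> R \<Longrightarrow> - x \<in> R"
  by (metis diff_0 subring_of_def)

lemma subring_of_sum:
  assumes "subring_of R" "\<And>i. i \<in> S \<Longrightarrow> f i \<in> R"
  shows "sum f S \<in> R"
  using assms(2)
  by (induction S rule: infinite_finite_induct)
    (simp_all add: subring_of_zero subring_of_add assms(1))

lemma monomial_in_adjoin:
  assumes "subring_of A" "a \<in> A"
  shows "a * u ^ j \<in> adjoin A u"
proof -
  have "(\<Sum>i\<le>j. (if i = j then a else 0) * u ^ i) = (\<Sum>i\<le>j. if i = j then a * u ^ i else 0)"
    by (rule sum.cong) auto
  then have "a * u ^ j = (\<Sum>i\<le>j. (if i = j then a else 0) * u ^ i)"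
    by simp
  then show ?thesis
    unfolding adjoin_def using assms
    by (intro CollectI exI[of _ j] exI[of _ "\<lambda>i. if i = j then a else 0"])
      (auto simp: subring_of_zero)
qed

lemma inverse_power_mult_power:
  fixes u w :: "'a::field"
  assumes "u * w = 1" "i \<le> r"
  shows "w ^ r * u ^ i = w ^ (r - i)"
proof -
  have "w ^ r * u ^ i = w ^ (r - i) * (u * w) ^ i"
    using assms(2) by (simp add: power_mult_distrib power_add[symmetric] algebra_simps)
  then show ?thesis using assms(1) by simp
qed

lemma poly_mult_inverse_power:
  fixes u w :: "'a::field"
  assumes "u * w = 1" "n \<le> r"
  shows "(\<Sum>i\<le>n. e i * u ^ i) * w ^ r = (\<Sum>i\<le>n. e i * w ^ (r - i))"
  unfolding sum_distrib_right
proof (rule sum.cong)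
  fix i assume "i \<in> {..n}"
  then show "e i * u ^ i * w ^ r = e i * w ^ (r - i)"
    using inverse_power_mult_power[OF assms(1), of i r] assms(2) by (simp add: ac_simps)
qed simp

inductive_set extended_ideal :: "'a::field set \<Rightarrow> 'a set \<Rightarrow> 'a set" for I B where
  zero: "0 \<in> extended_ideal I B"
| gen: "c \<in> I \<Longrightarrow> d \<in> B \<Longrightarrow> c * d \<in> extended_ideal I B"
| add: "x \<in> extended_ideal I B \<Longrightarrow> y \<in> extended_ideal I B \<Longrightarrow> x + y \<in> extended_ideal I B"

lemma extended_ideal_sum:
  fixes k :: nat
  assumes "\<And>j. j < k \<Longrightarrow> c j \<in> I" "\<And>j. j < k \<Longrightarrow> d j \<in> B"
  shows "(\<Sum>j<k. c j * d j) \<in> extended_ideal I B"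
  using assms by (induction k) (simp_all add: extended_ideal.intros)

lemma extended_ideal_mult:
  assumes B: "subring_of B"
    and x: "x \<in> extended_ideal I B" and y: "y \<in> extended_ideal J B"
    and IJ: "\<And>a b. a \<in> I \<Longrightarrow> b \<in> J \<Longrightarrow> a * b \<in> K"
  shows "x * y \<in> extended_ideal K B"
  using x
proof induction
  case (gen c d)
  from y show ?case
  proof induction
    case (gen c' d')
    have "c * d * (c' * d') = (c * c') * (d * d')" by (simp add: ac_simps)
    then show ?case
      using IJ \<open>c \<in> I\<close> \<open>c' \<in> J\<close> subring_of_mult[OF B \<open>d \<in> B\<close> \<open>d' \<in> B\<close>]
      by (metis extended_ideal.gen)
  qed (simp_all add: distrib_left extended_ideal.intros)
qed (simp_all add: distrib_right extended_ideal.intros)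

definition denominators :: "'a::field set \<Rightarrow> 'a \<Rightarrow> 'a set" where
  "denominators A y = {c \<in> A. c * y \<in> A}"

text \<open>The relation p \<cdot> 1 - q \<cdot> y = 0 for y = p / q factors through relations in A; the
  coefficients of 1 in the factorisation are denominators of y.\<close>

lemma flat_over_denominators_generate:
  assumes A: "subring_of A" and flat: "flat_over A B" and B: "subring_of B"
    and y: "y \<in> B" "y \<in> frac_field A"
  shows "1 \<in> extended_ideal (denominators A y) B"
proof -
  obtain p q where pq: "y = p / q" "p \<in> A" "q \<in> A" "q \<noteq> 0"
    using y(2) unfolding frac_field_def by blast
  define a where "a = (\<lambda>i::nat. if i = 0 then p else - q)"
  define b where "b = (\<lambda>i::nat. if i = 0 then 1 else y)"
  have "(\<forall>i<2. a i \<in> A) \<and> (\<forall>i<2. b i \<in> B) \<and> (\<Sum>i<2. a i * b i) = 0"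
    using pq y(1) subring_of_uminus[OF A] subring_of_one[OF B]
    by (simp add: a_def b_def numeral_2_eq_2 lessThan_Suc)
  then obtain k :: nat and c :: "nat \<Rightarrow> nat \<Rightarrow> 'a" and d where
    c: "\<forall>i<2. \<forall>j<k. c i j \<in> A" and d: "\<forall>j<k. d j \<in> B"
    and b_eq: "\<forall>i<2. b i = (\<Sum>j<k. c i j * d j)"
    and rel: "\<forall>j<k. (\<Sum>i<2. a i * c i j) = 0"
    using flat unfolding flat_over_def by blast
  have "c 0 j \<in> denominators A y" if j: "j < k" for j
  proof -
    have "q * (c 0 j * y) = q * c 1 j"
      using rel j pq(1,4) by (simp add: a_def numeral_2_eq_2 lessThan_Suc algebra_simps)
    then have "c 0 j * y = c 1 j" using pq(4) by simp
    then show ?thesis using c j unfolding denominators_def by simp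
  qed
  moreover have "1 = (\<Sum>j<k. c 0 j * d j)" using b_eq[rule_format, of 0] by (simp add: b_def)
  ultimately show ?thesis using d by (metis extended_ideal_sum)
qed

definition power_denominators :: "'a::field set \<Rightarrow> 'a \<Rightarrow> nat \<Rightarrow> 'a set" where
  "power_denominators A w N = {c \<in> A. \<forall>i\<le>N. c * w ^ i \<in> A}"

lemma power_denominators_mult:
  assumes A: "subring_of A"
    and a: "a \<in> power_denominators A w N" and b: "b \<in> denominators A w"
  shows "a * b \<in> power_denominators A w (Suc N)"
proof -
  have "a * b * w ^ i \<in> A" if i: "i \<le> Suc N" for i
  proof (cases "i \<le> N")
    case True
    then have "(a * w ^ i) * b \<in> A"
      using a b subring_of_mult[OF A]
      unfolding power_denominators_def denominators_def by blast
    then show ?thesis by (simp add: ac_simps)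
  next
    case False
    then have "(a * w ^ N) * (b * w) \<in> A"
      using a b subring_of_mult[OF A]
      unfolding power_denominators_def denominators_def by blast
    then show ?thesis using False i by (simp add: le_Suc_eq ac_simps)
  qed
  moreover have "a * b \<in> A"
    using a b subring_of_mult[OF A] unfolding power_denominators_def denominators_def by blast
  ultimately show ?thesis unfolding power_denominators_def by blast
qed

lemma one_in_extended_power_denominators:
  assumes A: "subring_of A" and B: "subring_of B"
    and one: "1 \<in> extended_ideal (denominators A w) B"
  shows "1 \<in> extended_ideal (power_denominators A w N) B"
proof (induction N)
  case 0
  have "1 * 1 \<in> extended_ideal (power_denominators A w 0) B"
    using subring_of_one[OF A] subring_of_one[OF B]
    by (intro extended_ideal.gen) (auto simp: power_denominators_def)
  then show ?case by simp
next
  case (Suc N)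
  show ?case
    using extended_ideal_mult[OF B Suc one power_denominators_mult[OF A]] by simp
qed

lemma power_denominators_clear_all_powers:
  assumes A: "subring_of A" and uw: "u * w = 1"
    and w: "w = (\<Sum>i\<le>n. e i * u ^ i)" and e: "\<And>i. e i \<in> A"
    and c: "c \<in> power_denominators A w n"
  shows "c * w ^ t \<in> A"
proof (induction t rule: less_induct)
  case (less t)
  show ?case
  proof (cases "t \<le> n")
    case True
    then show ?thesis using c unfolding power_denominators_def by blast
  next
    case False
    then obtain s where s: "t = Suc s" "n \<le> s" by (cases t) auto
    have "c * w ^ t = c * (w * w ^ s)" using s(1) by simp
    also have "\<dots> = (\<Sum>i\<le>n. e i * (c * w ^ (s - i)))"
      using poly_mult_inverse_power[OF uw s(2), of e] w
      by (simp add: sum_distrib_left ac_simps)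
    also have "\<dots> \<in> A"
      using less s subring_of_mult[OF A e] by (intro subring_of_sum[OF A]) simp
    finally show ?thesis .
  qed
qed

lemma adjoin_mult_eventually:
  assumes A: "subring_of A" and uw: "u * w = 1" and b: "b \<in> adjoin A u"
    and c: "\<forall>\<^sub>F r in sequentially. c * w ^ r \<in> A"
  shows "\<forall>\<^sub>F r in sequentially. c * b * w ^ r \<in> A"
proof -
  obtain n e where b_eq: "b = (\<Sum>i\<le>n. e i * u ^ i)" and e: "\<And>i. e i \<in> A"
    using b unfolding adjoin_def by blast
  obtain k where k: "\<And>r. r \<ge> k \<Longrightarrow> c * w ^ r \<in> A"
    using c unfolding eventually_sequentially by blast
  have "c * b * w ^ r \<in> A" if r: "r \<ge> n + k" for r
  proof -
    have "c * b * w ^ r = c * (\<Sum>i\<le>n. e i * w ^ (r - i))"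
      using poly_mult_inverse_power[OF uw, of n r e] r b_eq by (simp add: ac_simps)
    also have "\<dots> = (\<Sum>i\<le>n. e i * (c * w ^ (r - i)))"
      by (simp add: sum_distrib_left ac_simps)
    also have "\<dots> \<in> A"
      using r k subring_of_mult[OF A e] by (intro subring_of_sum[OF A]) simp
    finally show ?thesis .
  qed
  then show ?thesis unfolding eventually_sequentially by blast
qed

lemma extended_ideal_eventually:
  assumes A: "subring_of A" and uw: "u * w = 1"
    and x: "x \<in> extended_ideal I (adjoin A u)"
    and I: "\<And>c t. c \<in> I \<Longrightarrow> c * w ^ t \<in> A"
  shows "\<forall>\<^sub>F r in sequentially. x * w ^ r \<in> A"
  using x
proof induction
  case zero
  then show ?case by (simp add: subring_of_zero[OF A])
next
  case (gen c d)
  then show ?case using adjoin_mult_eventually[OF A uw] I by simp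
next
  case (add x y)
  from add.IH show ?case
    by eventually_elim (simp add: distrib_right subring_of_add[OF A])
qed

lemma is_localization_adjoin:
  assumes A: "subring_of A" and uw: "u * w = 1"
    and m: "m > 0" and wm: "\<And>r. r \<ge> m \<Longrightarrow> w ^ r \<in> A"
  shows "is_localization A (adjoin A u)"
proof -
  define S where "S = range (\<lambda>k. w ^ (m * k))"
  have w0: "w \<noteq> 0" using uw by auto
  have "mult_closed_nonzero A S"
    unfolding mult_closed_nonzero_def S_def
  proof (intro conjI)
    have "w ^ (m * k) \<in> A" for k
      using wm[of "m * k"] m subring_of_one[OF A] by (cases k) auto
    then show "range (\<lambda>k. w ^ (m * k)) \<subseteq> A - {0}"
      using w0 by auto
    show "1 \<in> range (\<lambda>k. w ^ (m * k))" by (metis mult_0_right power_0 rangeI)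
    show "\<forall>s\<in>range (\<lambda>k. w ^ (m * k)). \<forall>t\<in>range (\<lambda>k. w ^ (m * k)). s * t \<in> range (\<lambda>k. w ^ (m * k))"
      by (auto simp: power_add[symmetric] distrib_left[symmetric])
  qed
  moreover have "adjoin A u = {a / s | a s. a \<in> A \<and> s \<in> S}"
  proof (intro equalityI subsetI)
    fix b assume b: "b \<in> adjoin A u"
    have "\<forall>\<^sub>F r in sequentially. 1 * w ^ r \<in> A"
      using wm unfolding eventually_sequentially by auto
    then obtain D where D: "\<And>r. r \<ge> D \<Longrightarrow> 1 * b * w ^ r \<in> A"
      using adjoin_mult_eventually[OF A uw b] unfolding eventually_sequentially by blast
    have "b * w ^ (m * D) \<in> A" using D[of "m * D"] m by simp
    moreover have "b = b * w ^ (m * D) / w ^ (m * D)" using w0 by simp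
    ultimately show "b \<in> {a / s | a s. a \<in> A \<and> s \<in> S}" unfolding S_def by blast
  next
    fix x assume "x \<in> {a / s | a s. a \<in> A \<and> s \<in> S}"
    then obtain a k where a: "a \<in> A" and x: "x = a / w ^ (m * k)" unfolding S_def by blast
    have "inverse w = u" using uw by (metis inverse_unique mult.commute)
    then have "x = a * u ^ (m * k)" using x by (simp add: divide_inverse flip: power_inverse)
    then show "x \<in> adjoin A u" using monomial_in_adjoin[OF A a] by simp
  qed
  ultimately show ?thesis unfolding is_localization_def by blast
qed

theorem theorem4p1:
  fixes A :: "'a::field set" and u :: 'a
  assumes "subring_of A"
    and "overring A (adjoin A u)"
    and "flat_over A (adjoin A u)"
    and "is_unit_in (adjoin A u) u"
  shows "(\<exists>m::nat. m > 0 \<and> (\<forall>r\<ge>m. inverse u ^ r \<in> A)) \<and> is_localization A (adjoin A u)"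
proof -
  define w where "w = inverse u"
  have B: "subring_of (adjoin A u)" and B_frac: "adjoin A u \<subseteq> frac_field A"
    using assms(2) unfolding overring_def by auto
  have w: "w \<in> adjoin A u" and uw: "u * w = 1"
    using assms(4) unfolding is_unit_in_def w_def by (auto simp: inverse_unique)
  then obtain n e where w_eq: "w = (\<Sum>i\<le>n. e i * u ^ i)" and e: "\<And>i. e i \<in> A"
    unfolding adjoin_def by blast
  have "1 \<in> extended_ideal (denominators A w) (adjoin A u)"
    using flat_over_denominators_generate[OF assms(1,3) B w] w B_frac by blast
  then have "1 \<in> extended_ideal (power_denominators A w n) (adjoin A u)"
    by (rule one_in_extended_power_denominators[OF assms(1) B])
  then have "\<forall>\<^sub>F r in sequentially. 1 * w ^ r \<in> A"
    using extended_ideal_eventually[OF assms(1) uw]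
      power_denominators_clear_all_powers[OF assms(1) uw w_eq e] by blast
  then obtain N where N: "\<forall>r\<ge>N. w ^ r \<in> A"
    unfolding eventually_sequentially by auto
  then have "\<forall>r\<ge>Suc N. inverse u ^ r \<in> A"
    unfolding w_def by simp
  moreover have "is_localization A (adjoin A u)"
    using is_localization_adjoin[OF assms(1) uw, of "Suc N"] N by simp
  ultimately show ?thesis by blast
qed

end
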